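(* Let $\beta\in(0,1)$ and let $p_1\ge p_2\ge\cdots>0$, $\sum_\ell p_\ell=1$, satisfy $\max\{\ell\in\mathbb N:1/p_\ell\le x\}=x^\beta L(x)$ with $L$ slowly varying at infinity. Let $Y_1,Y_2,\dots$ be i.i.d. with $\mathbb P(Y_1=\ell)=p_\ell$, and let $0<\tau_1<\tau_2<\cdots$ be the arrival times of a standard Poisson process on $\mathbb R_+$ independent of $\{Y_i\}$. Define $\widetilde K_{n,\ell}=\sum_{i\ge1}\mathbf 1\{Y_i=\ell,\tau_i\le n\}$, $\widetilde K_n=\sum_{\ell\ge1}\mathbf 1\{\widetilde K_{n,\ell}\ne0\}$ and $\widetilde\Phi_n=\mathbb E\widetilde K_n$. Then for every real constant $c$, \[ \frac{\widetilde\Phi_n}{(\widetilde K_n+c)\vee1}\to1\quad\text{as }n\to\infty, \] almost surely and in $L^p$ for every $p\ge1$. *)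

theory Defs
  imports "HOL-Probability.Probability"
begin

definition nu_count :: "(nat \<Rightarrow> real) \<Rightarrow> real \<Rightarrow> nat" where
  "nu_count p x = Max (insert 0 {l. 1 \<le> l \<and> 1 / p l \<le> x})"

definition slowly_varying :: "(real \<Rightarrow> real) \<Rightarrow> bool" where
  "slowly_varying L \<longleftrightarrow> L \<in> borel_measurable borel \<and> (\<forall>\<^sub>F x in at_top. 0 < L x) \<and>
     (\<forall>a>0. ((\<lambda>x. L (a * x) / L x) \<longlongrightarrow> 1) at_top)"

text \<open>Arrival times of the Poisson process built from interarrival times E 0, E 1, ...:
  tau i = E 0 + ... + E i  (index i here corresponds to tau_(i+1) in the paper).\<close>
definition arrival :: "(nat \<Rightarrow> 'a \<Rightarrow> real) \<Rightarrow> nat \<Rightarrow> 'a \<Rightarrow> real" where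
  "arrival E i \<omega> = (\<Sum>j\<le>i. E j \<omega>)"

definition Ktil_l :: "(nat \<Rightarrow> 'a \<Rightarrow> nat) \<Rightarrow> (nat \<Rightarrow> 'a \<Rightarrow> real) \<Rightarrow> real \<Rightarrow> nat \<Rightarrow> 'a \<Rightarrow> ennreal" where
  "Ktil_l Y E t l \<omega> = (\<Sum>i. if Y i \<omega> = l \<and> arrival E i \<omega> \<le> t then 1 else 0)"

definition Ktil :: "(nat \<Rightarrow> 'a \<Rightarrow> nat) \<Rightarrow> (nat \<Rightarrow> 'a \<Rightarrow> real) \<Rightarrow> real \<Rightarrow> 'a \<Rightarrow> nat" where
  "Ktil Y E t \<omega> = card {l. 1 \<le> l \<and> Ktil_l Y E t l \<omega> \<noteq> 0}"

end

theory Submission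
  imports Defs "HOL-Real_Asymp.Real_Asymp"
begin

text \<open>
  After Poissonization the urns fill independently: by thinning of the Poisson process, urn \<open>l\<close>
  is still empty at time \<open>t\<close> with probability \<open>exp (- t * p l)\<close>, independently of the other
  urns. So \<open>Ktil t\<close> is a sum of independent Bernoulli variables with mean
  \<open>Phi t = (\<Sum>l. 1 - exp (- t * p l))\<close>; its variance is at most \<open>Phi t\<close>, and a Chernoff bound gives
  \<open>P(Ktil t \<le> Phi t / 2) \<le> exp (- (1/2 - exp (-1)) * Phi t)\<close>. As every \<open>p l\<close> is positive,
  \<open>Phi\<close> tends to infinity, and \<open>Phi (t + 1) \<le> Phi t + 1\<close>. Chebyshev's inequality and
  Borel-Cantelli give \<open>Ktil / Phi \<rightarrow> 1\<close> almost surely along the times where \<open>Phi\<close> first exceeds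
  \<open>k\<^sup>2\<close>, and monotonicity of \<open>Ktil\<close> and \<open>Phi\<close> fills the gaps. For \<open>L\<^sup>q\<close> convergence the ratio
  is at most 4 off the event \<open>Ktil \<le> Phi / 2\<close> and at most \<open>Phi\<close> everywhere, so the exponential
  tail makes dominated convergence applicable.
\<close>

lemma sums_geometric_Erlang_tail:
  fixes q t :: real
  assumes "0 < q" "q \<le> 1" "0 \<le> t"
  shows "(\<lambda>j. (1 - q) ^ j * q * (\<Sum>k\<le>j. t ^ k * exp (- t) / fact k)) sums exp (- t * q)"
proof -
  define P where "P k = t ^ k * exp (- t) / fact k" for k :: nat
  have partial: "(\<Sum>j<m. (1 - q) ^ j * q * (\<Sum>k\<le>j. P k))
      = (\<Sum>k<m. (1 - q) ^ k * P k) - (1 - q) ^ m * (\<Sum>k<m. P k)" for m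
  proof (induction m)
    case (Suc m)
    have "(\<Sum>k\<le>m. P k) = (\<Sum>k<m. P k) + P m" by (simp add: lessThan_Suc_atMost[symmetric])
    then show ?case using Suc by (simp add: algebra_simps)
  qed simp
  have exp_partial: "(\<lambda>m. \<Sum>k<m. s ^ k / fact k) \<longlonglongrightarrow> exp s" for s :: real
    using exp_converges[of s] unfolding sums_def by (simp add: divide_inverse mult.commute)
  have thinned: "(\<Sum>k<m. (1 - q) ^ k * P k) = exp (- t) * (\<Sum>k<m. (t * (1 - q)) ^ k / fact k)" for m
    unfolding P_def sum_distrib_left by (intro sum.cong refl) (simp add: power_mult_distrib)
  have total: "(\<Sum>k<m. P k) = exp (- t) * (\<Sum>k<m. t ^ k / fact k)" for m
    by (simp add: P_def sum_distrib_left algebra_simps)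
  have "(\<lambda>m. exp (- t) * (\<Sum>k<m. (t * (1 - q)) ^ k / fact k) - (1 - q) ^ m * (exp (- t) * (\<Sum>k<m. t ^ k / fact k)))
        \<longlonglongrightarrow> exp (- t) * exp (t * (1 - q)) - 0 * (exp (- t) * exp t)"
    using assms by (intro tendsto_intros exp_partial) auto
  moreover have "exp (- t) * exp (t * (1 - q)) - 0 * (exp (- t) * exp t) = exp (- t * q)"
    by (simp add: exp_add[symmetric] algebra_simps)
  ultimately show ?thesis
    unfolding sums_def P_def[symmetric] partial thinned total by simp
qed

lemma exp_minus_one_less_half: "exp (- 1 :: real) < 1 / 2"
proof -
  have "1 + 1 + 1 / 2 \<le> exp (1 :: real)"
    using exp_lower_Taylor_quadratic[of 1] by simp
  then show ?thesis by (simp add: exp_minus field_simps)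
qed

lemma integral_le_of_monotone_convergence:
  fixes f :: "nat \<Rightarrow> 'a \<Rightarrow> real"
  assumes f: "\<And>L. integrable M (f L)" and mono: "AE x in M. mono (\<lambda>L. f L x)"
    and lim: "AE x in M. (\<lambda>L. f L x) \<longlonglongrightarrow> u x" and u: "u \<in> borel_measurable M"
    and bound: "\<And>L. integral\<^sup>L M (f L) \<le> B"
  shows "integrable M u" and "integral\<^sup>L M u \<le> B"
proof -
  have "incseq (\<lambda>L. integral\<^sup>L M (f L))"
    using mono by (intro incseq_SucI integral_mono_AE f) (auto simp: mono_def)
  then obtain x where x: "(\<lambda>L. integral\<^sup>L M (f L)) \<longlonglongrightarrow> x"
    using incseq_convergent bound by metis
  show "integrable M u"
    by (rule integrable_monotone_convergence[OF f mono lim x u])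
  have "integral\<^sup>L M u = x"
    by (rule integral_monotone_convergence[OF f mono lim x u])
  also have "x \<le> B"
    using x bound by (intro LIMSEQ_le_const2) auto
  finally show "integral\<^sup>L M u \<le> B" .
qed

lemma (in prob_space) AE_notin_of_prob_le_tendsto_zero:
  assumes "N \<in> events" "\<And>m. prob N \<le> u m" "u \<longlonglongrightarrow> 0"
  shows "AE \<omega> in M. \<omega> \<notin> N"
proof (rule AE_I')
  have "prob N \<le> 0"
    using assms(2,3) by (intro LIMSEQ_le_const[of u 0]) auto
  then show "N \<in> null_sets M"
    using assms(1) measure_nonneg[of M N] by (auto simp: emeasure_eq_measure)
qed auto

lemma (in prob_space) AE_tendsto_of_summable_prob:
  fixes X :: "nat \<Rightarrow> 'a \<Rightarrow> real"
  assumes [measurable]: "\<And>k. X k \<in> borel_measurable M"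
    and summable: "\<And>e. 0 < e \<Longrightarrow> summable (\<lambda>k. prob {\<omega> \<in> space M. e \<le> \<bar>X k \<omega> - x\<bar>})"
  shows "AE \<omega> in M. (\<lambda>k. X k \<omega>) \<longlonglongrightarrow> x"
proof -
  have "AE \<omega> in M. \<forall>j. \<forall>\<^sub>F k in sequentially. \<bar>X k \<omega> - x\<bar> < inverse (real (Suc j))"
  proof (subst AE_all_countable, intro allI)
    fix j
    have "AE \<omega> in M. \<forall>\<^sub>F k in sequentially.
        \<omega> \<in> space M - {\<omega> \<in> space M. inverse (real (Suc j)) \<le> \<bar>X k \<omega> - x\<bar>}"
      by (intro borel_cantelli_AE1 summable) (auto simp: emeasure_eq_measure)
    then show "AE \<omega> in M. \<forall>\<^sub>F k in sequentially. \<bar>X k \<omega> - x\<bar> < inverse (real (Suc j))"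
      by eventually_elim (auto elim: eventually_mono)
  qed
  then show ?thesis
  proof eventually_elim
    case (elim \<omega>)
    show ?case
    proof (rule LIMSEQ_I)
      fix r :: real
      assume "0 < r"
      then obtain j where j: "inverse (real (Suc j)) < r"
        using reals_Archimedean by blast
      with elim[rule_format, of j] show "\<exists>N. \<forall>k\<ge>N. norm (X k \<omega> - x) < r"
        unfolding eventually_sequentially by (auto intro: less_trans)
    qed
  qed
qed

lemma (in prob_space) integral_min_tendsto_zero:
  fixes X :: "nat \<Rightarrow> 'a \<Rightarrow> real"
  assumes [measurable]: "\<And>n. X n \<in> borel_measurable M"
    and nonneg: "\<And>n \<omega>. 0 \<le> X n \<omega>" and "0 \<le> C"
    and lim: "AE \<omega> in M. (\<lambda>n. X n \<omega>) \<longlonglongrightarrow> 0"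
  shows "(\<lambda>n. integral\<^sup>L M (\<lambda>\<omega>. min (X n \<omega>) C)) \<longlonglongrightarrow> 0"
proof -
  have "(\<lambda>n. integral\<^sup>L M (\<lambda>\<omega>. min (X n \<omega>) C)) \<longlonglongrightarrow> integral\<^sup>L M (\<lambda>_. 0)"
  proof (rule integral_dominated_convergence[where w="\<lambda>_. C"])
    show "AE \<omega> in M. (\<lambda>n. min (X n \<omega>) C) \<longlonglongrightarrow> 0"
      using lim
    proof eventually_elim
      case (elim \<omega>)
      have "(\<lambda>n. min (X n \<omega>) C) \<longlonglongrightarrow> min 0 C"
        by (intro tendsto_min elim tendsto_const)
      then show ?case using \<open>0 \<le> C\<close> by simp
    qed
    show "AE \<omega> in M. norm (min (X n \<omega>) C) \<le> C" for n
      using nonneg \<open>0 \<le> C\<close> by (intro AE_I2) simp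
  qed simp_all
  then show ?thesis by simp
qed

lemma (in prob_space) integral_tendsto_zero_of_bounded_off_events:
  fixes X :: "nat \<Rightarrow> 'a \<Rightarrow> real"
  assumes [measurable]: "\<And>n. X n \<in> borel_measurable M" "\<And>n. A n \<in> events"
    and nonneg: "\<And>n \<omega>. 0 \<le> X n \<omega>" and bound: "\<And>n \<omega>. X n \<omega> \<le> B n"
    and lim: "AE \<omega> in M. (\<lambda>n. X n \<omega>) \<longlonglongrightarrow> 0"
    and off: "\<forall>\<^sub>F n in sequentially. \<forall>\<omega> \<in> space M - A n. X n \<omega> \<le> C"
    and tail: "(\<lambda>n. B n * prob (A n)) \<longlonglongrightarrow> 0"
  shows "(\<lambda>n. integral\<^sup>L M (X n)) \<longlonglongrightarrow> 0"
proof -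
  define g where "g n \<omega> = min (X n \<omega>) \<bar>C\<bar>" for n \<omega>
  have [measurable]: "g n \<in> borel_measurable M" for n
    unfolding g_def by measurable
  have int_X: "integrable M (X n)" for n
    using nonneg bound by (intro integrable_const_bound[where B="B n"]) auto
  have int_g: "integrable M (g n)" for n
    using nonneg by (intro integrable_const_bound[where B="\<bar>C\<bar>"]) (auto simp: g_def)
  have int_A: "integrable M (indicat_real (A n))" for n
    by (intro integrable_real_indicator) (auto simp: emeasure_eq_measure)
  have "(\<lambda>n. integral\<^sup>L M (g n)) \<longlonglongrightarrow> 0"
    unfolding g_def using nonneg lim by (intro integral_min_tendsto_zero) auto
  then have upper_lim: "(\<lambda>n. integral\<^sup>L M (g n) + B n * prob (A n)) \<longlonglongrightarrow> 0"
    using tail by (simp add: tendsto_add_zero)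
  have upper: "\<forall>\<^sub>F n in sequentially. integral\<^sup>L M (X n) \<le> integral\<^sup>L M (g n) + B n * prob (A n)"
    using off
  proof eventually_elim
    case (elim n)
    have "X n \<omega> \<le> g n \<omega> + B n * indicator (A n) \<omega>" if "\<omega> \<in> space M" for \<omega>
    proof (cases "\<omega> \<in> A n")
      case False
      then have "X n \<omega> \<le> C"
        using elim that by simp
      then show ?thesis
        using False abs_ge_self[of C] by (simp add: g_def min_absorb1)
    qed (use nonneg[of n \<omega>] bound[of n \<omega>] in \<open>simp add: g_def\<close>)
    then have "integral\<^sup>L M (X n) \<le> integral\<^sup>L M (\<lambda>\<omega>. g n \<omega> + B n * indicator (A n) \<omega>)"
      by (intro integral_mono int_X Bochner_Integration.integrable_add int_g
          integrable_mult_right int_A)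
    then show ?case
      using int_g int_A by (simp add: Bochner_Integration.integral_add)
  qed
  have lower: "\<forall>\<^sub>F n in sequentially. 0 \<le> integral\<^sup>L M (X n)"
    using nonneg by (intro always_eventually allI integral_nonneg_AE AE_I2)
  show ?thesis
    by (rule tendsto_sandwich[OF lower upper tendsto_const upper_lim])
qed

definition square_crossing :: "(nat \<Rightarrow> real) \<Rightarrow> nat \<Rightarrow> nat" where
  "square_crossing a k = (LEAST n. real (k\<^sup>2) \<le> a n)"

context
  fixes a :: "nat \<Rightarrow> real"
  assumes a_mono: "mono a" and a_unbounded: "filterlim a at_top sequentially"
    and a_step: "\<And>n. a (Suc n) \<le> a n + 1" and a_0: "a 0 < 1"
begin

lemma square_crossing_ge: "real (k\<^sup>2) \<le> a (square_crossing a k)"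
proof -
  have "\<exists>n. real (k\<^sup>2) \<le> a n"
    using a_unbounded unfolding filterlim_at_top by (metis eventually_sequentially order_refl)
  then show ?thesis
    unfolding square_crossing_def by (rule LeastI_ex)
qed

lemma square_crossing_least: "real (k\<^sup>2) \<le> a n \<Longrightarrow> square_crossing a k \<le> n"
  unfolding square_crossing_def by (rule Least_le)

lemma square_crossing_le:
  assumes "1 \<le> k"
  shows "a (square_crossing a k) \<le> real (k\<^sup>2) + 1"
proof -
  have "square_crossing a k \<noteq> 0"
  proof
    assume "square_crossing a k = 0"
    then have "real (k\<^sup>2) \<le> a 0" using square_crossing_ge[of k] by simp
    moreover have "1 \<le> real (k\<^sup>2)" using assms by simp
    ultimately show False using a_0 by linarith
  qed
  then obtain m where m: "square_crossing a k = Suc m"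
    using not0_implies_Suc by blast
  then have "a m < real (k\<^sup>2)"
    using square_crossing_least[of k m] by fastforce
  then show ?thesis using a_step[of m] m by simp
qed

lemma square_crossing_bracket:
  assumes "1 \<le> a n"
  defines "k \<equiv> nat \<lfloor>sqrt (a n)\<rfloor>"
  shows "1 \<le> k" and "square_crossing a k \<le> n" and "n \<le> square_crossing a (Suc k)"
proof -
  have a_nonneg: "0 \<le> a n" and "1 \<le> sqrt (a n)" using assms by simp_all
  then have floor_pos: "1 \<le> \<lfloor>sqrt (a n)\<rfloor>" by (simp add: le_floor_iff)
  then show "1 \<le> k" unfolding k_def by linarith
  have k: "real k = of_int \<lfloor>sqrt (a n)\<rfloor>" unfolding k_def using floor_pos by simp
  have "real k ^ 2 \<le> sqrt (a n) ^ 2"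
    unfolding k using a_nonneg floor_pos by (intro power_mono) auto
  then show "square_crossing a k \<le> n"
    using a_nonneg by (intro square_crossing_least) simp
  have "sqrt (a n) ^ 2 < (real k + 1) ^ 2"
    unfolding k using \<open>1 \<le> sqrt (a n)\<close>
    by (intro power_strict_mono real_of_int_floor_add_one_gt) auto
  then have "a n < real ((Suc k)\<^sup>2)" using a_nonneg by (simp add: add.commute)
  then show "n \<le> square_crossing a (Suc k)"
    using square_crossing_ge[of "Suc k"] monoD[OF a_mono, of "square_crossing a (Suc k)" n]
    by linarith
qed

lemma ratio_bounds_by_square_crossings:
  fixes x :: "nat \<Rightarrow> real"
  assumes x_mono: "mono x" and x_nonneg: "\<And>n. 0 \<le> x n" and an: "1 \<le> a n"
  defines "k \<equiv> nat \<lfloor>sqrt (a n)\<rfloor>" and "m \<equiv> square_crossing a"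
  shows "x (m k) / a (m k) * (real (k\<^sup>2) / (real ((Suc k)\<^sup>2) + 1)) \<le> x n / a n"
    and "x n / a n \<le> x (m (Suc k)) / a (m (Suc k)) * ((real ((Suc k)\<^sup>2) + 1) / real (k\<^sup>2))"
proof -
  have k: "1 \<le> k" "m k \<le> n" "n \<le> m (Suc k)"
    using square_crossing_bracket[OF an] unfolding k_def m_def by auto
  have a_lo: "real (k\<^sup>2) \<le> a (m k)" and a_hi: "a (m (Suc k)) \<le> real ((Suc k)\<^sup>2) + 1"
    unfolding m_def by (rule square_crossing_ge, rule square_crossing_le) simp
  have k_pos: "0 < real (k\<^sup>2)" using k by simp
  have a_m: "a (m k) \<le> a n" "a n \<le> a (m (Suc k))"
    using k a_mono by (auto simp: mono_def)
  have x_m: "x (m k) \<le> x n" "x n \<le> x (m (Suc k))"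
    using k x_mono by (auto simp: mono_def)
  have pos: "0 < a (m k)" "0 < a n" "0 < a (m (Suc k))"
    using a_lo a_m k_pos an by linarith+
  have "x (m k) / a (m k) * (real (k\<^sup>2) / (real ((Suc k)\<^sup>2) + 1))
      \<le> x (m k) / a (m k) * (a (m k) / a (m (Suc k)))"
    using a_lo a_hi k_pos pos x_nonneg[of "m k"] by (intro mult_left_mono frac_le) auto
  also have "\<dots> = x (m k) / a (m (Suc k))"
    using pos by simp
  also have "\<dots> \<le> x n / a n"
    using x_m a_m pos x_nonneg[of "m k"] by (intro frac_le) auto
  finally show "x (m k) / a (m k) * (real (k\<^sup>2) / (real ((Suc k)\<^sup>2) + 1)) \<le> x n / a n" .
  have "x n / a n \<le> x (m (Suc k)) / a (m k)"
    using x_m a_m pos x_nonneg[of n] by (intro frac_le) auto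
  also have "\<dots> = x (m (Suc k)) / a (m (Suc k)) * (a (m (Suc k)) / a (m k))"
    using pos by simp
  also have "\<dots> \<le> x (m (Suc k)) / a (m (Suc k)) * ((real ((Suc k)\<^sup>2) + 1) / real (k\<^sup>2))"
    using a_lo a_hi k_pos pos x_nonneg[of "m (Suc k)"] by (intro mult_left_mono frac_le) auto
  finally show "x n / a n \<le> x (m (Suc k)) / a (m (Suc k)) * ((real ((Suc k)\<^sup>2) + 1) / real (k\<^sup>2))" .
qed

text \<open>Since \<open>k\<^sup>2 \<le> a \<le> k\<^sup>2 + 1\<close> at the \<open>k\<close>-th square crossing, consecutive crossings differ
  by a factor \<open>1 + O(1/k)\<close>, and monotonicity controls \<open>x / a\<close> in between.\<close>

lemma tendsto_ratio_of_square_crossings: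
  fixes x :: "nat \<Rightarrow> real"
  assumes x_mono: "mono x" and x_nonneg: "\<And>n. 0 \<le> x n"
    and along: "(\<lambda>k. x (square_crossing a k) / a (square_crossing a k)) \<longlonglongrightarrow> 1"
  shows "(\<lambda>n. x n / a n) \<longlonglongrightarrow> 1"
proof -
  let ?r = "\<lambda>k. x (square_crossing a k) / a (square_crossing a k)"
  define lo where "lo k = ?r k * (real (k\<^sup>2) / (real ((Suc k)\<^sup>2) + 1))" for k
  define hi where "hi k = ?r (Suc k) * ((real ((Suc k)\<^sup>2) + 1) / real (k\<^sup>2))" for k
  define kn where "kn n = nat \<lfloor>sqrt (a n)\<rfloor>" for n
  have "(\<lambda>k::nat. real (k\<^sup>2) / (real ((Suc k)\<^sup>2) + 1)) \<longlonglongrightarrow> 1"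
    by real_asymp
  from tendsto_mult[OF along this] have lo_lim: "lo \<longlonglongrightarrow> 1"
    unfolding lo_def by simp
  have "(\<lambda>k::nat. (real ((Suc k)\<^sup>2) + 1) / real (k\<^sup>2)) \<longlonglongrightarrow> 1"
    by real_asymp
  from tendsto_mult[OF along[THEN LIMSEQ_Suc] this] have hi_lim: "hi \<longlonglongrightarrow> 1"
    unfolding hi_def by simp
  have kn_lim: "filterlim kn at_top sequentially"
    unfolding kn_def
    by (rule filterlim_compose[OF filterlim_nat_sequentially filterlim_compose[OF
          filterlim_floor_sequentially filterlim_compose[OF sqrt_at_top a_unbounded]]])
  have "\<forall>\<^sub>F n in sequentially. 1 \<le> a n"
    using a_unbounded unfolding filterlim_at_top by blast
  then have "\<forall>\<^sub>F n in sequentially. lo (kn n) \<le> x n / a n"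
    and "\<forall>\<^sub>F n in sequentially. x n / a n \<le> hi (kn n)"
    using ratio_bounds_by_square_crossings[OF x_mono x_nonneg]
    unfolding lo_def hi_def kn_def by (auto elim: eventually_mono)
  then show ?thesis
    by (rule tendsto_sandwich[OF _ _ filterlim_compose[OF lo_lim kn_lim] filterlim_compose[OF hi_lim kn_lim]])
qed

end

section \<open>The Poissonized urn scheme\<close>

locale poissonized_urns = prob_space M for M :: "'a measure" +
  fixes p :: "nat \<Rightarrow> real" and Y :: "nat \<Rightarrow> 'a \<Rightarrow> nat" and E :: "nat \<Rightarrow> 'a \<Rightarrow> real"
  assumes p_pos_all: "\<forall>l\<ge>1. 0 < p l" and p_sums: "(\<lambda>l. p (Suc l)) sums 1"
    and Y_measurable: "\<forall>i. Y i \<in> measurable M (count_space UNIV)"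
    and prob_Y_eq: "\<forall>i l. l \<ge> 1 \<longrightarrow> measure M {\<omega> \<in> space M. Y i \<omega> = l} = p l"
    and E_exponential: "\<forall>j. distributed M lborel (E j) (exponential_density 1)"
    and indep_Y_E: "indep_vars (\<lambda>_. borel)
      (\<lambda>k. case k of Inl i \<Rightarrow> (\<lambda>\<omega>. real (Y i \<omega>)) | Inr j \<Rightarrow> E j) UNIV"
begin

definition samples :: "nat + nat \<Rightarrow> 'a \<Rightarrow> real" where
  "samples k = (case k of Inl i \<Rightarrow> (\<lambda>\<omega>. real (Y i \<omega>)) | Inr j \<Rightarrow> E j)"

lemma indep_samples: "indep_vars (\<lambda>_. borel) samples UNIV"
  using indep_Y_E unfolding samples_def[abs_def] .

lemma measurable_Y [measurable]: "Y i \<in> measurable M (count_space UNIV)"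
  using Y_measurable by auto

lemma measurable_E [measurable]: "E j \<in> borel_measurable M"
  using distributed_measurable[OF E_exponential[rule_format, of j]] by simp

lemma measurable_arrival [measurable]: "arrival E i \<in> borel_measurable M"
  unfolding arrival_def[abs_def] by measurable

lemma AE_E_pos: "AE \<omega> in M. \<forall>j. 0 < E j \<omega>"
proof (subst AE_all_countable, intro allI)
  fix j
  have "prob {\<omega> \<in> space M. E j \<omega> \<le> 0} = 0"
    using exponential_distributedD_le[OF E_exponential[rule_format, of j], of 0] by simp
  then show "AE \<omega> in M. 0 < E j \<omega>"
    by (subst AE_iff_measurable[where N="{\<omega> \<in> space M. E j \<omega> \<le> 0}"])
       (auto simp: emeasure_eq_measure not_less)
qed

lemma arrival_mono:
  assumes "\<forall>j. 0 < E j \<omega>" "i \<le> k"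
  shows "arrival E i \<omega> \<le> arrival E k \<omega>"
  unfolding arrival_def using assms by (intro sum_mono2) (auto intro: less_imp_le)

lemma prob_arrival_gt:
  assumes "0 \<le> t"
  shows "prob {\<omega> \<in> space M. t < arrival E j \<omega>} = (\<Sum>k\<le>j. t ^ k * exp (- t) / fact k)"
proof -
  have inj: "inj_on (Inr :: nat \<Rightarrow> nat + nat) {..j}" by (auto simp: inj_on_def)
  have "distributed M lborel (\<lambda>x. \<Sum>i\<in>Inr ` {..j}. samples i x)
      (erlang_density (card (Inr ` {..j} :: (nat + nat) set) - 1) 1)"
  proof (rule exponential_distributed_sum)
    show "indep_vars (\<lambda>_. borel) samples (Inr ` {..j})"
      by (rule indep_vars_subset[OF indep_samples]) auto
  qed (auto simp: samples_def E_exponential)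
  moreover have "card (Inr ` {..j} :: (nat + nat) set) - 1 = j"
    using card_image[OF inj] by simp
  moreover have "(\<lambda>x. \<Sum>i\<in>Inr ` {..j}. samples i x) = arrival E j"
    by (auto simp: sum.reindex[OF inj] samples_def arrival_def fun_eq_iff)
  ultimately have "prob {\<omega> \<in> space M. t < arrival E j \<omega>} = 1 - erlang_CDF j 1 t"
    using erlang_distributed_gt[of "arrival E j" j 1 t] assms by simp
  then show ?thesis using assms by (simp add: erlang_CDF_def)
qed

lemma AE_arrival_unbounded: "AE \<omega> in M. \<forall>n::nat. \<exists>m. real n < arrival E m \<omega>"
proof (subst AE_all_countable, intro allI)
  fix n :: nat
  let ?N = "{\<omega> \<in> space M. \<forall>m. arrival E m \<omega> \<le> real n}"
  have "prob ?N \<le> 1 - (\<Sum>k\<le>m. real n ^ k * exp (- real n) / fact k)" for m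
  proof -
    have "prob ?N \<le> prob (space M - {\<omega> \<in> space M. real n < arrival E m \<omega>})"
      by (intro finite_measure_mono) (auto dest: spec[where x=m])
    also have "\<dots> = 1 - (\<Sum>k\<le>m. real n ^ k * exp (- real n) / fact k)"
      by (subst prob_compl) (auto simp: prob_arrival_gt)
    finally show ?thesis .
  qed
  moreover have "(\<lambda>m. \<Sum>k\<le>m. real n ^ k / fact k) \<longlonglongrightarrow> exp (real n)"
    using exp_converges[of "real n"] unfolding sums_def_le by (simp add: divide_inverse mult.commute)
  then have "(\<lambda>m. 1 - (\<Sum>k\<le>m. real n ^ k / fact k) * exp (- real n))
      \<longlonglongrightarrow> 1 - exp (real n) * exp (- real n)"
    by (intro tendsto_intros)
  then have "(\<lambda>m. 1 - (\<Sum>k\<le>m. real n ^ k * exp (- real n) / fact k)) \<longlonglongrightarrow> 0"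
    by (simp add: sum_distrib_right exp_minus)
  ultimately have "AE \<omega> in M. \<omega> \<notin> ?N"
    by (intro AE_notin_of_prob_le_tendsto_zero) auto
  then show "AE \<omega> in M. \<exists>m. real n < arrival E m \<omega>"
    using AE_space by eventually_elim (auto simp: not_le)
qed

lemma p_pos: "1 \<le> l \<Longrightarrow> 0 < p l"
  using p_pos_all by simp

lemma prob_Y_in:
  assumes "finite S" "S \<subseteq> {1..}"
  shows "prob {\<omega> \<in> space M. Y i \<omega> \<in> S} = sum p S"
  using assms
proof (induction S rule: finite_induct)
  case (insert l S)
  have "{\<omega> \<in> space M. Y i \<omega> \<in> insert l S} = {\<omega> \<in> space M. Y i \<omega> = l} \<union> {\<omega> \<in> space M. Y i \<omega> \<in> S}"
    by auto
  moreover have "prob ({\<omega> \<in> space M. Y i \<omega> = l} \<union> {\<omega> \<in> space M. Y i \<omega> \<in> S})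
      = prob {\<omega> \<in> space M. Y i \<omega> = l} + prob {\<omega> \<in> space M. Y i \<omega> \<in> S}"
    by (rule finite_measure_Union) (use insert in auto)
  ultimately show ?case using insert prob_Y_eq by auto
qed simp

lemma prob_Y_notin:
  assumes "finite S" "S \<subseteq> {1..}"
  shows "prob {\<omega> \<in> space M. Y i \<omega> \<notin> S} = 1 - sum p S"
proof -
  have "{\<omega> \<in> space M. Y i \<omega> \<notin> S} = space M - {\<omega> \<in> space M. Y i \<omega> \<in> S}" by auto
  then show ?thesis using prob_Y_in[OF assms] by (simp add: prob_compl)
qed

lemma sum_p_le_1:
  assumes "finite S" "S \<subseteq> {1..}"
  shows "sum p S \<le> 1"
  using prob_Y_in[OF assms, of 0] prob_le_1[of "{\<omega> \<in> space M. Y 0 \<omega> \<in> S}"] by simp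

lemma sum_p_pos:
  assumes "finite S" "S \<subseteq> {1..}" "S \<noteq> {}"
  shows "0 < sum p S"
  using assms p_pos by (intro sum_pos) auto

lemma prob_Y_all_in:
  assumes "finite J" "J \<noteq> {}"
  shows "prob {\<omega> \<in> space M. \<forall>i\<in>J. Y i \<omega> \<in> B i} = (\<Prod>i\<in>J. prob {\<omega> \<in> space M. Y i \<omega> \<in> B i})"
proof -
  let ?A = "\<lambda>k. case k of Inl i \<Rightarrow> real ` B i | Inr j \<Rightarrow> (UNIV :: real set)"
  have A: "?A k \<in> sets borel" for k
    by (cases k) (auto intro!: sets.countable[OF borel_closed] countable_image)
  have "prob (\<Inter>k\<in>Inl ` J. samples k -` ?A k \<inter> space M)
      = (\<Prod>k\<in>Inl ` J. prob (samples k -` ?A k \<inter> space M))"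
    by (rule indep_varsD[OF indep_samples]) (use assms A in auto)
  moreover have "(\<Inter>k\<in>Inl ` J. samples k -` ?A k \<inter> space M) = {\<omega> \<in> space M. \<forall>i\<in>J. Y i \<omega> \<in> B i}"
    using assms(2) by (auto simp: samples_def image_iff)
  moreover have "samples (Inl i) -` ?A (Inl i) \<inter> space M = {\<omega> \<in> space M. Y i \<omega> \<in> B i}" for i
    by (auto simp: samples_def image_iff)
  ultimately show ?thesis by (simp add: prod.reindex inj_on_def)
qed

lemma AE_Y_hits:
  assumes "finite S" "S \<subseteq> {1..}" "S \<noteq> {}"
  shows "AE \<omega> in M. \<exists>i. Y i \<omega> \<in> S"
proof -
  let ?N = "{\<omega> \<in> space M. \<forall>i. Y i \<omega> \<notin> S}"
  define q where "q = sum p S"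
  have q: "0 < q" "q \<le> 1"
    using sum_p_le_1[OF assms(1,2)] sum_p_pos[OF assms] by (auto simp: q_def)
  have "prob ?N \<le> (1 - q) ^ Suc m" for m
  proof -
    have "prob ?N \<le> prob {\<omega> \<in> space M. \<forall>i\<in>{..<Suc m}. Y i \<omega> \<in> - S}"
      by (intro finite_measure_mono) auto
    also have "\<dots> = (\<Prod>i\<in>{..<Suc m}. prob {\<omega> \<in> space M. Y i \<omega> \<in> - S})"
      by (rule prob_Y_all_in) auto
    also have "\<dots> = (1 - q) ^ Suc m"
      using prob_Y_notin[OF assms(1,2)] by (simp add: q_def)
    finally show ?thesis .
  qed
  moreover have "(\<lambda>m. (1 - q) ^ Suc m) \<longlonglongrightarrow> 0"
    by (rule LIMSEQ_power_zero[THEN LIMSEQ_Suc]) (use q in auto)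
  ultimately have "AE \<omega> in M. \<omega> \<notin> ?N"
    by (intro AE_notin_of_prob_le_tendsto_zero) auto
  then show ?thesis
    using AE_space by eventually_elim auto
qed

lemma prob_Y_first_in:
  assumes "finite S" "S \<subseteq> {1..}"
  shows "prob {\<omega> \<in> space M. Y j \<omega> \<in> S \<and> (\<forall>i<j. Y i \<omega> \<notin> S)} = (1 - sum p S) ^ j * sum p S"
proof -
  define C where "C i = (if i = j then S else - S)" for i
  have "{\<omega> \<in> space M. Y j \<omega> \<in> S \<and> (\<forall>i<j. Y i \<omega> \<notin> S)} = {\<omega> \<in> space M. \<forall>i\<in>insert j {..<j}. Y i \<omega> \<in> C i}"
    by (auto simp: C_def)
  also have "prob \<dots> = (\<Prod>i\<in>insert j {..<j}. prob {\<omega> \<in> space M. Y i \<omega> \<in> C i})"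
    by (rule prob_Y_all_in) auto
  also have "\<dots> = prob {\<omega> \<in> space M. Y j \<omega> \<in> S} * (\<Prod>i\<in>{..<j}. prob {\<omega> \<in> space M. Y i \<omega> \<notin> S})"
    by (simp add: C_def)
  also have "\<dots> = (1 - sum p S) ^ j * sum p S"
    using prob_Y_notin[OF assms] prob_Y_in[OF assms] by simp
  finally show ?thesis .
qed

lemma indep_var_first_in_arrival:
  assumes "finite S"
  shows "indep_var borel (\<lambda>\<omega>. of_bool (Y j \<omega> \<in> S \<and> (\<forall>i<j. Y i \<omega> \<notin> S)) :: real) borel (arrival E j)"
proof -
  define first where "first g = (g (Inl j) \<in> real ` S \<and> (\<forall>i\<in>{..<j}. g (Inl i) \<notin> real ` S))"
    for g :: "nat + nat \<Rightarrow> real"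
  define total where "total g = (\<Sum>i\<le>j. g (Inr i))" for g :: "nat + nat \<Rightarrow> real"
  have "real ` S \<in> sets borel"
    using assms by (intro borel_closed finite_imp_closed) auto
  moreover have "(\<lambda>g. g (Inl i)) \<in> borel_measurable (PiM (Inl ` {..j}) (\<lambda>_. borel))" if "i \<le> j" for i
    using measurable_component_singleton[of "Inl i" "Inl ` {..j}" "\<lambda>_. borel"] that by simp
  ultimately have "Measurable.pred (PiM (Inl ` {..j}) (\<lambda>_. borel)) first"
    unfolding first_def
    by (intro pred_intros_logic(3) pred_intros_countable_bounded(3) pred_intros_logic(2) pred_sets2) auto
  then have "(\<lambda>g. of_bool (first g) :: real) \<in> borel_measurable (PiM (Inl ` {..j}) (\<lambda>_. borel))"
    by measurable
  moreover have "total \<in> borel_measurable (PiM (Inr ` {..j}) (\<lambda>_. borel))"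
    unfolding total_def
    using measurable_component_singleton[of "Inr i" "Inr ` {..j}" "\<lambda>_. borel" for i]
    by (intro borel_measurable_sum) auto
  ultimately have "indep_var
      borel ((\<lambda>g. of_bool (first g) :: real) \<circ> (\<lambda>\<omega>. restrict (\<lambda>k. samples k \<omega>) (Inl ` {..j})))
      borel (total \<circ> (\<lambda>\<omega>. restrict (\<lambda>k. samples k \<omega>) (Inr ` {..j})))"
    by (intro indep_var_compose[OF indep_var_restrict[OF indep_samples]]) auto
  moreover have "(\<lambda>g. of_bool (first g) :: real) \<circ> (\<lambda>\<omega>. restrict (\<lambda>k. samples k \<omega>) (Inl ` {..j}))
      = (\<lambda>\<omega>. of_bool (Y j \<omega> \<in> S \<and> (\<forall>i<j. Y i \<omega> \<notin> S)))"
    unfolding first_def samples_def by (auto simp: fun_eq_iff image_iff)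
  moreover have "total \<circ> (\<lambda>\<omega>. restrict (\<lambda>k. samples k \<omega>) (Inr ` {..j})) = arrival E j"
    by (simp add: fun_eq_iff total_def samples_def arrival_def)
  ultimately show ?thesis by simp
qed

lemma prob_Y_first_in_arrival_gt:
  assumes "finite S"
  shows "prob {\<omega> \<in> space M. (Y j \<omega> \<in> S \<and> (\<forall>i<j. Y i \<omega> \<notin> S)) \<and> t < arrival E j \<omega>}
    = prob {\<omega> \<in> space M. Y j \<omega> \<in> S \<and> (\<forall>i<j. Y i \<omega> \<notin> S)} * prob {\<omega> \<in> space M. t < arrival E j \<omega>}"
  using indep_varD[OF indep_var_first_in_arrival[OF assms], of "{1}" "{t<..}"]
  by (simp add: vimage_def Int_def conj_commute conj_left_commute)

lemma AE_no_arrival_in_before_iff_first: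
  assumes "finite S" "S \<subseteq> {1..}" "S \<noteq> {}"
  shows "AE \<omega> in M. (\<forall>i. Y i \<omega> \<in> S \<longrightarrow> t < arrival E i \<omega>) \<longleftrightarrow>
    (\<exists>j. (Y j \<omega> \<in> S \<and> (\<forall>i<j. Y i \<omega> \<notin> S)) \<and> t < arrival E j \<omega>)"
  using AE_Y_hits[OF assms] AE_E_pos
proof eventually_elim
  case (elim \<omega>)
  define j where "j = (LEAST i. Y i \<omega> \<in> S)"
  have j: "Y j \<omega> \<in> S" "\<forall>i<j. Y i \<omega> \<notin> S"
    unfolding j_def using elim(1) not_less_Least by (auto intro: LeastI_ex)
  then have first_unique: "i = j" if "Y i \<omega> \<in> S" "\<forall>i'<i. Y i' \<omega> \<notin> S" for i
    using that not_less_iff_gr_or_eq by blast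
  have "t < arrival E i \<omega>" if "t < arrival E j \<omega>" "Y i \<omega> \<in> S" for i
    using that j arrival_mono[OF elim(2), of j i] by (meson less_le_trans not_le)
  then have "(\<forall>i. Y i \<omega> \<in> S \<longrightarrow> t < arrival E i \<omega>) \<longleftrightarrow> t < arrival E j \<omega>"
    using j by blast
  moreover have "(\<exists>j'. (Y j' \<omega> \<in> S \<and> (\<forall>i<j'. Y i \<omega> \<notin> S)) \<and> t < arrival E j' \<omega>) \<longleftrightarrow> t < arrival E j \<omega>"
    using j first_unique by blast
  ultimately show ?case by simp
qed

text \<open>The first arrival coloured in \<open>S\<close> has a geometric index, independent of the Erlang
  arrival times.\<close>

lemma prob_no_arrival_in_before:
  assumes "0 \<le> t" "finite S" "S \<subseteq> {1..}"
  shows "prob {\<omega> \<in> space M. \<forall>i. Y i \<omega> \<in> S \<longrightarrow> t < arrival E i \<omega>} = exp (- t * sum p S)"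
proof (cases "S = {}")
  case True
  then show ?thesis by (simp add: prob_space)
next
  case False
  define q where "q = sum p S"
  have q: "0 < q" "q \<le> 1"
    using sum_p_le_1[OF assms(2,3)] sum_p_pos[OF assms(2,3) False] by (auto simp: q_def)
  define D where "D j = {\<omega> \<in> space M. (Y j \<omega> \<in> S \<and> (\<forall>i<j. Y i \<omega> \<notin> S)) \<and> t < arrival E j \<omega>}" for j
  have D_events: "range D \<subseteq> events" unfolding D_def by auto
  have "disjoint_family D"
    unfolding disjoint_family_on_def D_def by (auto dest: not_less_iff_gr_or_eq[THEN iffD1])
  then have "(\<lambda>j. prob (D j)) sums prob (\<Union>j. D j)"
    by (rule finite_measure_UNION[OF D_events])
  moreover have "prob (D j) = (1 - q) ^ j * q * (\<Sum>k\<le>j. t ^ k * exp (- t) / fact k)" for j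
    unfolding D_def q_def prob_Y_first_in_arrival_gt[OF assms(2)]
    by (simp only: prob_Y_first_in[OF assms(2,3)] prob_arrival_gt[OF assms(1)])
  then have "(\<lambda>j. prob (D j)) sums exp (- t * q)"
    using sums_geometric_Erlang_tail[OF q assms(1)] by simp
  moreover have "AE \<omega> in M. \<omega> \<in> {\<omega> \<in> space M. \<forall>i. Y i \<omega> \<in> S \<longrightarrow> t < arrival E i \<omega>} \<longleftrightarrow> \<omega> \<in> (\<Union>j. D j)"
    using AE_space AE_no_arrival_in_before_iff_first[OF assms(2,3) False, of t]
    by eventually_elim (auto simp: D_def)
  then have "prob {\<omega> \<in> space M. \<forall>i. Y i \<omega> \<in> S \<longrightarrow> t < arrival E i \<omega>} = prob (\<Union>j. D j)"
    by (rule measure_eq_AE) (use D_events in auto)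
  ultimately show ?thesis
    unfolding q_def by (metis sums_unique2)
qed

definition occupied :: "real \<Rightarrow> nat \<Rightarrow> 'a \<Rightarrow> bool" where
  "occupied t l \<omega> \<longleftrightarrow> (\<exists>i. Y i \<omega> = l \<and> arrival E i \<omega> \<le> t)"

definition vacancy :: "real \<Rightarrow> nat \<Rightarrow> 'a \<Rightarrow> real" where
  "vacancy t l \<omega> = of_bool (\<not> occupied t l \<omega>)"

lemma measurable_occupied [measurable]: "Measurable.pred M (occupied t l)"
  unfolding occupied_def[abs_def] by measurable

lemma measurable_vacancy [measurable]: "vacancy t l \<in> borel_measurable M"
  unfolding vacancy_def[abs_def] by measurable

lemma vacancy_cases: "vacancy t l \<omega> = 0 \<or> vacancy t l \<omega> = 1"
  by (simp add: vacancy_def)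

lemma prob_all_vacant:
  assumes "0 \<le> t" "finite S" "S \<subseteq> {1..}"
  shows "prob {\<omega> \<in> space M. \<forall>l\<in>S. \<not> occupied t l \<omega>} = (\<Prod>l\<in>S. exp (- t * p l))"
proof -
  have "{\<omega> \<in> space M. \<forall>l\<in>S. \<not> occupied t l \<omega>} = {\<omega> \<in> space M. \<forall>i. Y i \<omega> \<in> S \<longrightarrow> t < arrival E i \<omega>}"
    by (auto simp: occupied_def not_le)
  then show ?thesis
    using prob_no_arrival_in_before[OF assms]
    by (simp add: exp_sum[OF assms(2), symmetric] sum_distrib_left sum_negf)
qed

lemma prod_vacancy: "finite S \<Longrightarrow> (\<Prod>l\<in>S. vacancy t l \<omega>) = of_bool (\<forall>l\<in>S. \<not> occupied t l \<omega>)"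
  by (induction S rule: finite_induct) (auto simp: vacancy_def)

text \<open>The vacancy indicators behave like independent Bernoulli variables with means
  \<open>exp (- t * p l)\<close>: expanding the product reduces everything to \<open>prob_all_vacant\<close>.\<close>

lemma integral_prod_affine_vacancy:
  assumes "0 \<le> t" "finite F" "F \<subseteq> {1..}"
  shows "integral\<^sup>L M (\<lambda>\<omega>. \<Prod>l\<in>F. a l + b l * vacancy t l \<omega>) = (\<Prod>l\<in>F. a l + b l * exp (- t * p l))"
proof -
  define G where "G S = {\<omega> \<in> space M. \<forall>l\<in>S. \<not> occupied t l \<omega>}" for S
  have G_events: "G S \<in> events" for S
    unfolding G_def by measurable
  define c where "c S = (\<Prod>l\<in>S. b l) * (\<Prod>l\<in>F - S. a l)" for S
  have expand: "(\<Prod>l\<in>F. a l + b l * vacancy t l \<omega>) = (\<Sum>S\<in>Pow F. c S * indicator (G S) \<omega>)"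
    if "\<omega> \<in> space M" for \<omega>
  proof -
    have "(\<Prod>l\<in>F. a l + b l * vacancy t l \<omega>) = (\<Sum>S\<in>Pow F. (\<Prod>l\<in>S. b l * vacancy t l \<omega>) * (\<Prod>l\<in>F - S. a l))"
      using prod_add[OF assms(2), of "\<lambda>l. b l * vacancy t l \<omega>" a] by (simp add: add.commute)
    also have "\<dots> = (\<Sum>S\<in>Pow F. c S * indicator (G S) \<omega>)"
      using that assms(2)
      by (intro sum.cong refl) (auto simp: c_def G_def prod.distrib prod_vacancy indicator_def
          dest: finite_subset)
    finally show ?thesis .
  qed
  have "integral\<^sup>L M (\<lambda>\<omega>. \<Prod>l\<in>F. a l + b l * vacancy t l \<omega>)
      = integral\<^sup>L M (\<lambda>\<omega>. \<Sum>S\<in>Pow F. c S * indicator (G S) \<omega>)"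
    by (rule Bochner_Integration.integral_cong[OF refl expand])
  also have "\<dots> = (\<Sum>S\<in>Pow F. c S * prob (G S))"
    using G_events by (simp add: emeasure_eq_measure)
  also have "\<dots> = (\<Sum>S\<in>Pow F. (\<Prod>l\<in>S. b l * exp (- t * p l)) * (\<Prod>l\<in>F - S. a l))"
  proof (intro sum.cong refl)
    fix S
    assume "S \<in> Pow F"
    then have "finite S" "S \<subseteq> {1..}" using assms(2,3) finite_subset by auto
    from prob_all_vacant[OF assms(1) this]
    show "c S * prob (G S) = (\<Prod>l\<in>S. b l * exp (- t * p l)) * (\<Prod>l\<in>F - S. a l)"
      unfolding c_def G_def by (simp add: prod.distrib)
  qed
  also have "\<dots> = (\<Prod>l\<in>F. a l + b l * exp (- t * p l))"
    using prod_add[OF assms(2), of "\<lambda>l. b l * exp (- t * p l)" a] by (simp add: add.commute)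
  finally show ?thesis .
qed

definition occupied_set :: "real \<Rightarrow> 'a \<Rightarrow> nat set" where
  "occupied_set t \<omega> = {l. 1 \<le> l \<and> occupied t l \<omega>}"

lemma Ktil_eq_card: "Ktil Y E t \<omega> = card (occupied_set t \<omega>)"
proof -
  have "Ktil_l Y E t l \<omega> \<noteq> 0 \<longleftrightarrow> occupied t l \<omega>" for l
    by (simp add: Ktil_l_def occupied_def suminf_eq_zero_iff)
  then show ?thesis unfolding Ktil_def occupied_set_def by simp
qed

definition regular_arrivals :: "'a \<Rightarrow> bool" where
  "regular_arrivals \<omega> \<longleftrightarrow> (\<forall>j. 0 < E j \<omega>) \<and> (\<forall>n::nat. \<exists>m. real n < arrival E m \<omega>)"

lemma AE_regular_arrivals: "AE \<omega> in M. regular_arrivals \<omega>"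
  using AE_E_pos AE_arrival_unbounded unfolding regular_arrivals_def by auto

lemma finite_occupied_set:
  assumes "regular_arrivals \<omega>"
  shows "finite (occupied_set t \<omega>)"
proof -
  obtain n :: nat where n: "t \<le> real n" using real_arch_simple by blast
  obtain m where m: "real n < arrival E m \<omega>" using assms unfolding regular_arrivals_def by blast
  have "i < m" if "arrival E i \<omega> \<le> t" for i
    using that n m arrival_mono[of \<omega> m i] assms unfolding regular_arrivals_def by force
  then have "occupied_set t \<omega> \<subseteq> (\<lambda>i. Y i \<omega>) ` {..<m}"
    unfolding occupied_set_def occupied_def by blast
  then show ?thesis by (rule finite_subset) auto
qed

lemma Ktil_mono:
  assumes "regular_arrivals \<omega>" "t \<le> t'"
  shows "Ktil Y E t \<omega> \<le> Ktil Y E t' \<omega>"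
  unfolding Ktil_eq_card using assms finite_occupied_set[OF assms(1), of t']
  by (intro card_mono) (auto simp: occupied_set_def occupied_def)

definition Ktrunc :: "real \<Rightarrow> nat \<Rightarrow> 'a \<Rightarrow> real" where
  "Ktrunc t L \<omega> = (\<Sum>l\<in>{1..L}. 1 - vacancy t l \<omega>)"

lemma measurable_Ktrunc [measurable]: "Ktrunc t L \<in> borel_measurable M"
  unfolding Ktrunc_def[abs_def] by measurable

lemma Ktrunc_eq_card: "Ktrunc t L \<omega> = real (card {l\<in>{1..L}. occupied t l \<omega>})"
proof -
  have "Ktrunc t L \<omega> = (\<Sum>l\<in>{1..L}. if occupied t l \<omega> then 1 else 0)"
    unfolding Ktrunc_def vacancy_def by (intro sum.cong) auto
  also have "\<dots> = (\<Sum>l\<in>{l\<in>{1..L}. occupied t l \<omega>}. 1)"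
    by (subst sum.inter_filter) auto
  finally show ?thesis by simp
qed

lemma Ktrunc_nonneg: "0 \<le> Ktrunc t L \<omega>"
  unfolding Ktrunc_eq_card by simp

lemma Ktrunc_le: "Ktrunc t L \<omega> \<le> real L"
proof -
  have "card {l\<in>{1..L}. occupied t l \<omega>} \<le> card {1..L}" by (intro card_mono) auto
  then show ?thesis unfolding Ktrunc_eq_card by simp
qed

lemma Ktrunc_mono: "L \<le> L' \<Longrightarrow> Ktrunc t L \<omega> \<le> Ktrunc t L' \<omega>"
  unfolding Ktrunc_def by (intro sum_mono2) (auto simp: vacancy_def)

lemma integrable_Ktrunc: "integrable M (Ktrunc t L)"
  using Ktrunc_nonneg Ktrunc_le by (intro integrable_const_bound[where B="real L"]) auto

lemma Ktrunc_le_Ktil: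
  assumes "regular_arrivals \<omega>"
  shows "Ktrunc t L \<omega> \<le> real (Ktil Y E t \<omega>)"
  unfolding Ktrunc_eq_card Ktil_eq_card using finite_occupied_set[OF assms]
  by (intro of_nat_mono card_mono) (auto simp: occupied_set_def)

lemma Ktrunc_eventually_eq:
  assumes "finite (occupied_set t \<omega>)" "Max (insert 0 (occupied_set t \<omega>)) \<le> L"
  shows "Ktrunc t L \<omega> = real (card (occupied_set t \<omega>))"
proof -
  have "l \<le> L" if "l \<in> occupied_set t \<omega>" for l
    using that assms Max_ge[of "insert 0 (occupied_set t \<omega>)" l] by auto
  then have "{l\<in>{1..L}. occupied t l \<omega>} = occupied_set t \<omega>"
    by (auto simp: occupied_set_def)
  then show ?thesis by (simp add: Ktrunc_eq_card)
qed

lemma Ktrunc_tendsto: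
  assumes "finite (occupied_set t \<omega>)"
  shows "(\<lambda>L. Ktrunc t L \<omega>) \<longlonglongrightarrow> real (card (occupied_set t \<omega>))"
  using Ktrunc_eventually_eq[OF assms] by (intro tendsto_eventually) (auto simp: eventually_sequentially)

text \<open>On the null set where infinitely many urns are occupied, \<open>Ktil\<close> is \<open>0\<close> (the junk value
  of \<open>card\<close>); elsewhere it is the limit of the truncations.\<close>

lemma measurable_Ktil [measurable]: "(\<lambda>\<omega>. real (Ktil Y E t \<omega>)) \<in> borel_measurable M"
proof -
  have bounded_iff: "finite (occupied_set t \<omega>) \<longleftrightarrow> (\<exists>m. \<forall>l. 1 \<le> l \<and> occupied t l \<omega> \<longrightarrow> l < m)" for \<omega>
    unfolding finite_nat_set_iff_bounded occupied_set_def by auto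
  have "real (Ktil Y E t \<omega>)
      = (if \<exists>m. \<forall>l. 1 \<le> l \<and> occupied t l \<omega> \<longrightarrow> l < m then lim (\<lambda>L. Ktrunc t L \<omega>) else 0)" for \<omega>
    using limI[OF Ktrunc_tendsto] bounded_iff[of \<omega>] by (auto simp: Ktil_eq_card)
  then show ?thesis by simp
qed

subsection \<open>Mean and concentration of the number of occupied urns\<close>

definition occ_prob :: "real \<Rightarrow> nat \<Rightarrow> real" where
  "occ_prob t l = 1 - exp (- t * p l)"

definition Phi_upto :: "real \<Rightarrow> nat \<Rightarrow> real" where
  "Phi_upto t L = (\<Sum>l\<in>{1..L}. occ_prob t l)"

definition Phi :: "real \<Rightarrow> real" where
  "Phi t = (\<Sum>l. occ_prob t (Suc l))"

lemma occ_prob_nonneg: "0 \<le> t \<Longrightarrow> 1 \<le> l \<Longrightarrow> 0 \<le> occ_prob t l"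
  unfolding occ_prob_def using p_pos[of l] by simp

lemma occ_prob_le: "occ_prob t l \<le> t * p l"
  unfolding occ_prob_def using exp_ge_add_one_self[of "- t * p l"] by simp

lemma occ_prob_mono: "0 \<le> t \<Longrightarrow> t \<le> t' \<Longrightarrow> 1 \<le> l \<Longrightarrow> occ_prob t l \<le> occ_prob t' l"
  unfolding occ_prob_def using p_pos[of l] by (auto intro!: mult_right_mono)

lemma occ_prob_step: "0 \<le> t \<Longrightarrow> 1 \<le> l \<Longrightarrow> occ_prob (t + 1) l \<le> occ_prob t l + p l"
proof -
  assume "0 \<le> t" "1 \<le> l"
  then have "0 < p l" "0 \<le> t * p l" using p_pos[of l] by auto
  have "occ_prob (t + 1) l - occ_prob t l = exp (- t * p l) * (1 - exp (- p l))"
    unfolding occ_prob_def by (simp add: algebra_simps exp_add[symmetric])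
  also have "\<dots> \<le> 1 * (1 - exp (- p l))"
    using \<open>0 < p l\<close> \<open>0 \<le> t * p l\<close> by (intro mult_right_mono) auto
  also have "\<dots> \<le> p l" using exp_ge_add_one_self[of "- p l"] by simp
  finally show ?thesis by simp
qed

lemma summable_occ_prob:
  assumes "0 \<le> t"
  shows "summable (\<lambda>l. occ_prob t (Suc l))"
proof (rule summable_comparison_test)
  show "\<exists>N. \<forall>l\<ge>N. norm (occ_prob t (Suc l)) \<le> t * p (Suc l)"
    using occ_prob_le occ_prob_nonneg[OF assms] by auto
  show "summable (\<lambda>l. t * p (Suc l))"
    using p_sums by (intro summable_mult) (simp add: sums_summable)
qed

lemma Phi_upto_eq_sum_lessThan: "Phi_upto t L = (\<Sum>l<L. occ_prob t (Suc l))"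
  unfolding Phi_upto_def by (induction L) (auto simp: atLeastAtMostSuc_conv)

lemma Phi_upto_tendsto: "0 \<le> t \<Longrightarrow> (\<lambda>L. Phi_upto t L) \<longlonglongrightarrow> Phi t"
  unfolding Phi_upto_eq_sum_lessThan Phi_def using summable_occ_prob by (simp add: summable_LIMSEQ)

lemma Phi_upto_nonneg: "0 \<le> t \<Longrightarrow> 0 \<le> Phi_upto t L"
  unfolding Phi_upto_def by (intro sum_nonneg occ_prob_nonneg) auto

lemma Phi_upto_le_Phi: "0 \<le> t \<Longrightarrow> Phi_upto t L \<le> Phi t"
  unfolding Phi_upto_eq_sum_lessThan Phi_def using summable_occ_prob occ_prob_nonneg
  by (intro sum_le_suminf) auto

lemma Phi_nonneg: "0 \<le> t \<Longrightarrow> 0 \<le> Phi t"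
  using Phi_upto_le_Phi[of t 0] by (simp add: Phi_upto_def)

lemma Phi_0: "Phi 0 = 0"
  unfolding Phi_def occ_prob_def by simp

lemma Phi_mono: "0 \<le> t \<Longrightarrow> t \<le> t' \<Longrightarrow> Phi t \<le> Phi t'"
  unfolding Phi_def using summable_occ_prob occ_prob_mono by (intro suminf_le) auto

lemma Phi_step: "0 \<le> t \<Longrightarrow> Phi (t + 1) \<le> Phi t + 1"
proof -
  assume t: "0 \<le> t"
  have "Phi (t + 1) \<le> (\<Sum>l. occ_prob t (Suc l) + p (Suc l))"
    unfolding Phi_def using summable_occ_prob[of "t + 1"] summable_occ_prob[OF t] t p_sums occ_prob_step[OF t]
    by (intro suminf_le summable_add) (auto simp: sums_summable)
  also have "\<dots> = Phi t + 1"
    unfolding Phi_def using summable_occ_prob[OF t] p_sums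
    by (subst suminf_add[symmetric]) (auto simp: sums_summable sums_unique[symmetric])
  finally show ?thesis .
qed

lemma Phi_at_top: "filterlim (\<lambda>n::nat. Phi (real n)) at_top sequentially"
proof (subst filterlim_at_top, intro allI)
  fix Z :: real
  obtain L :: nat where L: "Z < real L" using reals_Archimedean2 by blast
  have "(\<lambda>n::nat. Phi_upto (real n) L) \<longlonglongrightarrow> (\<Sum>l\<in>{1..L}. 1 - 0)"
    unfolding Phi_upto_def occ_prob_def
  proof (intro tendsto_intros)
    fix l
    assume "l \<in> {1..L}"
    then have "(\<lambda>n. exp (- p l) ^ n) \<longlonglongrightarrow> 0"
      using p_pos[of l] by (intro LIMSEQ_power_zero) auto
    then show "(\<lambda>n. exp (- real n * p l)) \<longlonglongrightarrow> 0"
      by (simp add: exp_of_nat_mult[symmetric] mult.commute)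
  qed
  then have "\<forall>\<^sub>F n in sequentially. Z < Phi_upto (real n) L"
    using L by (intro order_tendstoD(1)) auto
  then show "\<forall>\<^sub>F n in sequentially. Z \<le> Phi (real n)"
  proof eventually_elim
    case (elim n)
    then show ?case using Phi_upto_le_Phi[of "real n" L] by simp
  qed
qed

text \<open>Since \<open>1 - vacancy\<close> is an indicator, the case \<open>l = m\<close> needs no separate formula.\<close>

lemma integral_occupied_pair:
  assumes "0 \<le> t" "1 \<le> l" "1 \<le> m"
  shows "integral\<^sup>L M (\<lambda>\<omega>. (1 - vacancy t l \<omega>) * (1 - vacancy t m \<omega>)) = (\<Prod>k\<in>{l, m}. occ_prob t k)"
proof -
  have "(1 - vacancy t l \<omega>) * (1 - vacancy t m \<omega>) = (\<Prod>k\<in>{l, m}. 1 + (- 1) * vacancy t k \<omega>)" for \<omega>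
    by (cases "l = m") (use vacancy_cases[of t l \<omega>] in auto)
  then show ?thesis
    using integral_prod_affine_vacancy[OF assms(1), of "{l, m}" "\<lambda>_. 1" "\<lambda>_. - 1"] assms
    by (simp add: occ_prob_def)
qed

lemma integral_occupied:
  assumes "0 \<le> t" "1 \<le> l"
  shows "integral\<^sup>L M (\<lambda>\<omega>. 1 - vacancy t l \<omega>) = occ_prob t l"
  using integral_prod_affine_vacancy[OF assms(1), of "{l}" "\<lambda>_. 1" "\<lambda>_. - 1"] assms(2)
  by (simp add: occ_prob_def)

lemma integral_Ktrunc:
  assumes "0 \<le> t"
  shows "integral\<^sup>L M (Ktrunc t L) = Phi_upto t L"
proof -
  have "integrable M (\<lambda>\<omega>. 1 - vacancy t l \<omega>)" for l
    by (rule integrable_const_bound[where B=1]) (auto simp: vacancy_def)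
  then show ?thesis
    unfolding Ktrunc_def Phi_upto_def
    by (subst Bochner_Integration.integral_sum) (auto intro!: sum.cong integral_occupied assms)
qed

lemma integral_Ktrunc_sq_le:
  assumes "0 \<le> t"
  shows "integral\<^sup>L M (\<lambda>\<omega>. (Ktrunc t L \<omega>)\<^sup>2) \<le> Phi_upto t L + (Phi_upto t L)\<^sup>2"
proof -
  define F where "F = {1..L}"
  define occ where "occ l \<omega> = 1 - vacancy t l \<omega>" for l \<omega>
  have int: "integrable M (\<lambda>\<omega>. occ l \<omega> * occ m \<omega>)" for l m
    by (rule integrable_const_bound[where B=1]) (auto simp: occ_def vacancy_def)
  have "integral\<^sup>L M (\<lambda>\<omega>. (Ktrunc t L \<omega>)\<^sup>2) = integral\<^sup>L M (\<lambda>\<omega>. \<Sum>l\<in>F. \<Sum>m\<in>F. occ l \<omega> * occ m \<omega>)"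
    unfolding Ktrunc_def power2_eq_square sum_product F_def occ_def ..
  also have "\<dots> = (\<Sum>l\<in>F. \<Sum>m\<in>F. integral\<^sup>L M (\<lambda>\<omega>. occ l \<omega> * occ m \<omega>))"
    using int by (simp add: Bochner_Integration.integral_sum Bochner_Integration.integrable_sum)
  also have "\<dots> = (\<Sum>l\<in>F. \<Sum>m\<in>F. \<Prod>k\<in>{l, m}. occ_prob t k)"
    unfolding occ_def F_def by (intro sum.cong refl integral_occupied_pair assms) auto
  also have "\<dots> \<le> (\<Sum>l\<in>F. \<Sum>m\<in>F. (if l = m then occ_prob t l else 0) + occ_prob t l * occ_prob t m)"
  proof (intro sum_mono)
    fix l m
    assume "l \<in> F" "m \<in> F"
    then have "0 \<le> occ_prob t l" "0 \<le> occ_prob t m"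
      using occ_prob_nonneg[OF assms] unfolding F_def by auto
    then show "(\<Prod>k\<in>{l, m}. occ_prob t k) \<le> (if l = m then occ_prob t l else 0) + occ_prob t l * occ_prob t m"
      by (cases "l = m") auto
  qed
  also have "\<dots> = (\<Sum>l\<in>F. occ_prob t l) + (\<Sum>l\<in>F. \<Sum>m\<in>F. occ_prob t l * occ_prob t m)"
    unfolding sum.distrib by (simp add: F_def sum.delta)
  also have "\<dots> = Phi_upto t L + (Phi_upto t L)\<^sup>2"
    unfolding Phi_upto_def F_def power2_eq_square sum_product ..
  finally show ?thesis .
qed

lemma integral_exp_neg_Ktrunc_le:
  assumes "0 \<le> t"
  shows "integral\<^sup>L M (\<lambda>\<omega>. exp (- Ktrunc t L \<omega>)) \<le> exp (- (1 - exp (- 1)) * Phi_upto t L)"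
proof -
  have "exp (- Ktrunc t L \<omega>) = (\<Prod>l\<in>{1..L}. exp (- 1) + (1 - exp (- 1)) * vacancy t l \<omega>)" for \<omega>
    unfolding Ktrunc_def sum_negf[symmetric] exp_sum[OF finite_atLeastAtMost]
    by (intro prod.cong refl) (auto simp: vacancy_def)
  then have "integral\<^sup>L M (\<lambda>\<omega>. exp (- Ktrunc t L \<omega>))
      = (\<Prod>l\<in>{1..L}. exp (- 1) + (1 - exp (- 1)) * exp (- t * p l))"
    using integral_prod_affine_vacancy[OF assms, of "{1..L}"] by simp
  also have "\<dots> \<le> (\<Prod>l\<in>{1..L}. exp (- (1 - exp (- 1)) * occ_prob t l))"
  proof (intro prod_mono conjI)
    fix l
    have "exp (- 1) + (1 - exp (- 1)) * exp (- t * p l) = 1 + (- (1 - exp (- 1)) * occ_prob t l)"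
      unfolding occ_prob_def by (simp add: algebra_simps)
    also have "\<dots> \<le> exp (- (1 - exp (- 1)) * occ_prob t l)" by (rule exp_ge_add_one_self)
    finally show "exp (- 1) + (1 - exp (- 1)) * exp (- t * p l) \<le> exp (- (1 - exp (- 1)) * occ_prob t l)" .
    show "0 \<le> exp (- 1) + (1 - exp (- 1)) * exp (- t * p l)"
      by (intro add_nonneg_nonneg mult_nonneg_nonneg) auto
  qed
  also have "\<dots> = exp (- (1 - exp (- 1)) * Phi_upto t L)"
    unfolding Phi_upto_def by (simp add: exp_sum[symmetric] sum_distrib_left)
  finally show ?thesis .
qed

lemma AE_Ktrunc_tendsto_Ktil: "AE \<omega> in M. (\<lambda>L. Ktrunc t L \<omega>) \<longlonglongrightarrow> real (Ktil Y E t \<omega>)"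
  using AE_regular_arrivals by eventually_elim (simp add: Ktil_eq_card Ktrunc_tendsto finite_occupied_set)

lemma AE_Ktrunc_mono: "AE \<omega> in M. mono (\<lambda>L. Ktrunc t L \<omega>)"
  by (auto intro!: monoI Ktrunc_mono)

lemma
  assumes "0 \<le> t"
  shows integrable_Ktil: "integrable M (\<lambda>\<omega>. real (Ktil Y E t \<omega>))"
    and integral_Ktil: "integral\<^sup>L M (\<lambda>\<omega>. real (Ktil Y E t \<omega>)) = Phi t"
  using Phi_upto_tendsto[OF assms]
  by (simp_all add: integral_Ktrunc[OF assms, symmetric] integrable_Ktrunc AE_Ktrunc_mono
      integrable_monotone_convergence[OF _ _ AE_Ktrunc_tendsto_Ktil]
      integral_monotone_convergence[OF _ _ AE_Ktrunc_tendsto_Ktil])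

lemma
  assumes "0 \<le> t"
  shows integrable_Ktil_sq: "integrable M (\<lambda>\<omega>. (real (Ktil Y E t \<omega>))\<^sup>2)"
    and integral_Ktil_sq_le: "integral\<^sup>L M (\<lambda>\<omega>. (real (Ktil Y E t \<omega>))\<^sup>2) \<le> Phi t + (Phi t)\<^sup>2"
proof -
  have int: "integrable M (\<lambda>\<omega>. (Ktrunc t L \<omega>)\<^sup>2)" for L
    using Ktrunc_nonneg Ktrunc_le
    by (intro integrable_const_bound[where B="(real L)\<^sup>2"]) (auto intro!: power_mono)
  have mono: "AE \<omega> in M. mono (\<lambda>L. (Ktrunc t L \<omega>)\<^sup>2)"
    using Ktrunc_nonneg by (auto intro!: monoI power_mono Ktrunc_mono)
  have lim: "AE \<omega> in M. (\<lambda>L. (Ktrunc t L \<omega>)\<^sup>2) \<longlonglongrightarrow> (real (Ktil Y E t \<omega>))\<^sup>2"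
    using AE_Ktrunc_tendsto_Ktil by eventually_elim (rule tendsto_power)
  have bound: "integral\<^sup>L M (\<lambda>\<omega>. (Ktrunc t L \<omega>)\<^sup>2) \<le> Phi t + (Phi t)\<^sup>2" for L
  proof -
    have "(Phi_upto t L)\<^sup>2 \<le> (Phi t)\<^sup>2"
      using Phi_upto_nonneg[OF assms] Phi_upto_le_Phi[OF assms] by (intro power_mono)
    then show ?thesis
      using integral_Ktrunc_sq_le[OF assms, of L] Phi_upto_le_Phi[OF assms, of L] by linarith
  qed
  show "integrable M (\<lambda>\<omega>. (real (Ktil Y E t \<omega>))\<^sup>2)"
    "integral\<^sup>L M (\<lambda>\<omega>. (real (Ktil Y E t \<omega>))\<^sup>2) \<le> Phi t + (Phi t)\<^sup>2"
    by (rule integral_le_of_monotone_convergence[OF int mono lim _ bound], simp)+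
qed

lemma integral_Ktil_variance_le:
  assumes "0 \<le> t"
  shows "integral\<^sup>L M (\<lambda>\<omega>. (real (Ktil Y E t \<omega>) - Phi t)\<^sup>2) \<le> Phi t"
proof -
  let ?K = "\<lambda>\<omega>. real (Ktil Y E t \<omega>)"
  have "(\<lambda>\<omega>. (?K \<omega> - Phi t)\<^sup>2) = (\<lambda>\<omega>. (?K \<omega>)\<^sup>2 - 2 * Phi t * ?K \<omega> + (Phi t)\<^sup>2)"
    by (simp add: fun_eq_iff power2_diff algebra_simps)
  then have "integral\<^sup>L M (\<lambda>\<omega>. (?K \<omega> - Phi t)\<^sup>2)
      = integral\<^sup>L M (\<lambda>\<omega>. (?K \<omega>)\<^sup>2) - 2 * Phi t * integral\<^sup>L M ?K + (Phi t)\<^sup>2"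
    using integrable_Ktil[OF assms] integrable_Ktil_sq[OF assms] by (simp add: prob_space)
  then show ?thesis
    using integral_Ktil_sq_le[OF assms] integral_Ktil[OF assms] by (simp add: power2_eq_square)
qed

lemma prob_Ktil_deviation_le:
  assumes "0 \<le> t" "0 < a"
  shows "prob {\<omega> \<in> space M. a \<le> \<bar>real (Ktil Y E t \<omega>) - Phi t\<bar>} \<le> Phi t / a\<^sup>2"
proof -
  have int: "integrable M (\<lambda>\<omega>. (real (Ktil Y E t \<omega>) - Phi t)\<^sup>2)"
    using integrable_Ktil[OF assms(1)] integrable_Ktil_sq[OF assms(1)] by (simp add: power2_diff)
  have "{\<omega> \<in> space M. a \<le> \<bar>real (Ktil Y E t \<omega>) - Phi t\<bar>}
      = {\<omega> \<in> space M. a\<^sup>2 \<le> (real (Ktil Y E t \<omega>) - Phi t)\<^sup>2}"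
    using assms(2) by (auto simp: abs_le_square_iff[symmetric])
  also have "prob \<dots> \<le> integral\<^sup>L M (\<lambda>\<omega>. (real (Ktil Y E t \<omega>) - Phi t)\<^sup>2) / a\<^sup>2"
    using assms(2) by (intro integral_Markov_inequality_measure[OF int, where A="space M"]) auto
  also have "\<dots> \<le> Phi t / a\<^sup>2"
    by (intro divide_right_mono integral_Ktil_variance_le assms) simp
  finally show ?thesis .
qed

lemma integral_exp_neg_Ktil_le:
  assumes "0 \<le> t"
  shows "integral\<^sup>L M (\<lambda>\<omega>. exp (- real (Ktil Y E t \<omega>))) \<le> exp (- (1 - exp (- 1)) * Phi t)"
proof -
  have int: "integrable M (\<lambda>\<omega>. exp (- real (Ktil Y E t \<omega>)))"
    by (rule integrable_const_bound[where B=1]) auto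
  have le: "integral\<^sup>L M (\<lambda>\<omega>. exp (- real (Ktil Y E t \<omega>))) \<le> exp (- (1 - exp (- 1)) * Phi_upto t L)" for L
  proof -
    have "AE \<omega> in M. exp (- real (Ktil Y E t \<omega>)) \<le> exp (- Ktrunc t L \<omega>)"
      using AE_regular_arrivals by eventually_elim (simp add: Ktrunc_le_Ktil)
    then have "integral\<^sup>L M (\<lambda>\<omega>. exp (- real (Ktil Y E t \<omega>))) \<le> integral\<^sup>L M (\<lambda>\<omega>. exp (- Ktrunc t L \<omega>))"
      using Ktrunc_nonneg by (intro integral_mono_AE int integrable_const_bound[where B=1]) auto
    also have "\<dots> \<le> exp (- (1 - exp (- 1)) * Phi_upto t L)"
      by (rule integral_exp_neg_Ktrunc_le[OF assms])
    finally show ?thesis .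
  qed
  have "(\<lambda>L. exp (- (1 - exp (- 1)) * Phi_upto t L)) \<longlonglongrightarrow> exp (- (1 - exp (- 1)) * Phi t)"
    by (intro tendsto_intros Phi_upto_tendsto[OF assms])
  then show ?thesis using le by (intro LIMSEQ_le_const) auto
qed

lemma prob_Ktil_le_half:
  assumes "0 \<le> t"
  shows "prob {\<omega> \<in> space M. real (Ktil Y E t \<omega>) \<le> Phi t / 2} \<le> exp (- (1 / 2 - exp (- 1)) * Phi t)"
proof -
  have int: "integrable M (\<lambda>\<omega>. exp (- real (Ktil Y E t \<omega>)))"
    by (rule integrable_const_bound[where B=1]) auto
  have "{\<omega> \<in> space M. real (Ktil Y E t \<omega>) \<le> Phi t / 2}
      = {\<omega> \<in> space M. exp (- (Phi t / 2)) \<le> exp (- real (Ktil Y E t \<omega>))}"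
    by auto
  also have "prob \<dots> \<le> integral\<^sup>L M (\<lambda>\<omega>. exp (- real (Ktil Y E t \<omega>))) / exp (- (Phi t / 2))"
    by (rule integral_Markov_inequality_measure[OF int, where A="space M"]) auto
  also have "\<dots> \<le> exp (- (1 - exp (- 1)) * Phi t) / exp (- (Phi t / 2))"
    by (intro divide_right_mono integral_exp_neg_Ktil_le[OF assms]) auto
  also have "\<dots> = exp (- (1 / 2 - exp (- 1)) * Phi t)"
    by (simp add: exp_diff[symmetric] algebra_simps)
  finally show ?thesis .
qed

subsection \<open>Convergence of the ratio\<close>

lemma
  shows Phi_nat_mono: "mono (\<lambda>n::nat. Phi (real n))"
    and Phi_nat_step: "\<And>n. Phi (real (Suc n)) \<le> Phi (real n) + 1"
    and Phi_nat_0: "Phi (real 0) < 1"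
  using Phi_mono Phi_step[of "real n" for n] by (auto intro!: monoI simp: Phi_0 add.commute)

lemma prob_Ktil_ratio_deviation_le:
  assumes "0 \<le> t" "0 < Phi t" "0 < e"
  shows "prob {\<omega> \<in> space M. e \<le> \<bar>real (Ktil Y E t \<omega>) / Phi t - 1\<bar>} \<le> 1 / (e\<^sup>2 * Phi t)"
proof -
  have "e \<le> \<bar>x / Phi t - 1\<bar> \<longleftrightarrow> e * Phi t \<le> \<bar>x - Phi t\<bar>" for x
  proof -
    have "x / Phi t - 1 = (x - Phi t) / Phi t"
      using assms(2) by (simp add: field_simps)
    then have "\<bar>x / Phi t - 1\<bar> = \<bar>x - Phi t\<bar> / Phi t"
      using assms(2) by (simp add: abs_divide)
    then show ?thesis using assms(2) by (simp add: le_divide_eq)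
  qed
  then have "{\<omega> \<in> space M. e \<le> \<bar>real (Ktil Y E t \<omega>) / Phi t - 1\<bar>}
      = {\<omega> \<in> space M. e * Phi t \<le> \<bar>real (Ktil Y E t \<omega>) - Phi t\<bar>}"
    by simp
  also have "prob \<dots> \<le> Phi t / (e * Phi t)\<^sup>2"
    using assms by (intro prob_Ktil_deviation_le) auto
  also have "\<dots> = 1 / (e\<^sup>2 * Phi t)"
    using assms by (simp add: power2_eq_square field_simps)
  finally show ?thesis .
qed

lemma AE_Ktil_ratio_tendsto_square_crossings:
  defines "m \<equiv> square_crossing (\<lambda>n. Phi (real n))"
  shows "AE \<omega> in M. (\<lambda>k. real (Ktil Y E (real (m k)) \<omega>) / Phi (real (m k))) \<longlonglongrightarrow> 1"
proof (rule AE_tendsto_of_summable_prob)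
  fix e :: real
  assume e: "0 < e"
  define g where "g k = 1 / e\<^sup>2 * inverse (real k ^ 2)" for k
  have "summable g"
    unfolding g_def using inverse_power_summable[of 2, where 'a=real] by (intro summable_mult) simp
  then show "summable (\<lambda>k. prob {\<omega> \<in> space M. e \<le> \<bar>real (Ktil Y E (real (m k)) \<omega>) / Phi (real (m k)) - 1\<bar>})"
  proof (rule summable_comparison_test'[where N=1])
    fix k :: nat
    assume k: "1 \<le> k"
    have "real (k\<^sup>2) \<le> Phi (real (m k))"
      unfolding m_def by (rule square_crossing_ge[OF Phi_nat_mono Phi_at_top Phi_nat_step Phi_nat_0])
    moreover have "1 \<le> real (k\<^sup>2)" using k by simp
    ultimately have "prob {\<omega> \<in> space M. e \<le> \<bar>real (Ktil Y E (real (m k)) \<omega>) / Phi (real (m k)) - 1\<bar>}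
        \<le> 1 / (e\<^sup>2 * Phi (real (m k)))"
      using e by (intro prob_Ktil_ratio_deviation_le) auto
    also have "\<dots> \<le> 1 / (e\<^sup>2 * real (k\<^sup>2))"
      using \<open>real (k\<^sup>2) \<le> Phi (real (m k))\<close> k e
      by (intro frac_le mult_left_mono mult_pos_pos) auto
    also have "\<dots> = g k"
      unfolding g_def by (simp add: field_simps)
    finally show "norm (prob {\<omega> \<in> space M. e \<le> \<bar>real (Ktil Y E (real (m k)) \<omega>) / Phi (real (m k)) - 1\<bar>}) \<le> g k"
      by (simp only: real_norm_def abs_of_nonneg[OF measure_nonneg])
  qed
qed measurable

lemma AE_Ktil_ratio_tendsto: "AE \<omega> in M. (\<lambda>n. real (Ktil Y E (real n) \<omega>) / Phi (real n)) \<longlonglongrightarrow> 1"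
  using AE_Ktil_ratio_tendsto_square_crossings AE_regular_arrivals
proof eventually_elim
  case (elim \<omega>)
  show ?case
    using Ktil_mono[OF elim(2)] elim(1)
    by (intro tendsto_ratio_of_square_crossings[OF Phi_nat_mono Phi_at_top Phi_nat_step Phi_nat_0])
       (auto intro!: monoI)
qed

definition ratio :: "real \<Rightarrow> nat \<Rightarrow> 'a \<Rightarrow> real" where
  "ratio c n \<omega> = Phi (real n) / max (real (Ktil Y E (real n) \<omega>) + c) 1"

lemma measurable_ratio [measurable]: "ratio c n \<in> borel_measurable M"
  unfolding ratio_def[abs_def] by measurable

lemma ratio_nonneg: "0 \<le> ratio c n \<omega>"
  unfolding ratio_def using Phi_nonneg[of "real n"] by simp

lemma ratio_le_Phi: "ratio c n \<omega> \<le> Phi (real n)"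
  unfolding ratio_def using Phi_nonneg[of "real n"]
  by (simp add: divide_le_eq_1 field_simps divide_le_cancel mult_le_cancel_left1 le_divide_eq)

lemma ratio_eq:
  assumes "1 \<le> real (Ktil Y E (real n) \<omega>) + c"
  shows "ratio c n \<omega> = Phi (real n) / (real (Ktil Y E (real n) \<omega>) + c)"
  unfolding ratio_def using assms by simp

lemma AE_ratio_tendsto: "AE \<omega> in M. (\<lambda>n. ratio c n \<omega>) \<longlonglongrightarrow> 1"
  using AE_Ktil_ratio_tendsto
proof eventually_elim
  case (elim \<omega>)
  define K where "K n = real (Ktil Y E (real n) \<omega>)" for n
  define P where "P n = Phi (real n)" for n
  have KP: "(\<lambda>n. K n / P n) \<longlonglongrightarrow> 1"
    using elim unfolding K_def P_def .
  have "(\<lambda>n. c / P n) \<longlonglongrightarrow> 0"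
    unfolding P_def by (intro tendsto_divide_0[OF tendsto_const] filterlim_at_top_imp_at_infinity Phi_at_top)
  from tendsto_divide[OF tendsto_const tendsto_add[OF KP this], of 1]
  have lim: "(\<lambda>n. 1 / (K n / P n + c / P n)) \<longlonglongrightarrow> 1"
    by simp
  have "\<forall>\<^sub>F n in sequentially. 1 / 2 < K n / P n"
    using KP by (intro order_tendstoD(1)) auto
  moreover have "\<forall>\<^sub>F n in sequentially. 2 + 2 * \<bar>c\<bar> \<le> P n"
    using Phi_at_top unfolding filterlim_at_top P_def by blast
  ultimately have "\<forall>\<^sub>F n in sequentially. 1 / (K n / P n + c / P n) = ratio c n \<omega>"
  proof eventually_elim
    case (elim n)
    have P_pos: "0 < P n" using elim(2) abs_ge_zero[of c] by linarith
    then have "P n / 2 < K n" using elim(1) by (simp add: field_simps)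
    then have "1 \<le> K n + c" using elim(2) abs_ge_minus_self[of c] by linarith
    then show ?case
      using P_pos ratio_eq[of n \<omega> c] unfolding K_def P_def by (simp add: field_simps)
  qed
  then show ?case using lim by (simp add: tendsto_cong)
qed

lemma ratio_powr_le:
  assumes "0 \<le> q"
  shows "\<bar>ratio c n \<omega> - 1\<bar> powr q \<le> (Phi (real n) + 1) powr q"
proof -
  have "\<bar>ratio c n \<omega> - 1\<bar> \<le> Phi (real n) + 1"
    using ratio_nonneg[of c n \<omega>] ratio_le_Phi[of c n \<omega>] by linarith
  then show ?thesis using assms by (simp add: powr_mono2)
qed

lemma integrable_ratio_powr:
  assumes "0 \<le> q"
  shows "integrable M (\<lambda>\<omega>. \<bar>ratio c n \<omega> - 1\<bar> powr q)"
  using ratio_powr_le[OF assms] by (intro integrable_const_bound[where B="(Phi (real n) + 1) powr q"]) auto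

lemma ratio_powr_le_off_lower_tail:
  assumes "0 \<le> q" "4 + 4 * \<bar>c\<bar> \<le> Phi (real n)" "Phi (real n) / 2 < real (Ktil Y E (real n) \<omega>)"
  shows "\<bar>ratio c n \<omega> - 1\<bar> powr q \<le> 3 powr q"
proof -
  have K_large: "Phi (real n) / 4 + 1 \<le> real (Ktil Y E (real n) \<omega>) + c"
    using assms(2,3) by linarith
  have Phi_pos: "0 < Phi (real n)"
    using assms(2) abs_ge_zero[of c] by linarith
  have "ratio c n \<omega> = Phi (real n) / (real (Ktil Y E (real n) \<omega>) + c)"
    using K_large Phi_pos by (intro ratio_eq) simp
  also have "\<dots> \<le> Phi (real n) / (Phi (real n) / 4)"
    using K_large Phi_pos by (intro divide_left_mono) auto
  also have "\<dots> = 4"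
    using Phi_pos by simp
  finally have "\<bar>ratio c n \<omega> - 1\<bar> \<le> 3"
    using ratio_nonneg[of c n \<omega>] by simp
  then show ?thesis
    using assms(1) by (simp add: powr_mono2)
qed

lemma lower_tail_weighted_tendsto:
  "(\<lambda>n. (Phi (real n) + 1) powr q * prob {\<omega> \<in> space M. real (Ktil Y E (real n) \<omega>) \<le> Phi (real n) / 2})
    \<longlonglongrightarrow> 0"
proof -
  define \<kappa> where "\<kappa> = 1 / 2 - exp (- 1 :: real)"
  have "0 < \<kappa>" unfolding \<kappa>_def using exp_minus_one_less_half by simp
  then have "((\<lambda>x. (x + 1) powr q * exp (- \<kappa> * x)) \<longlongrightarrow> 0) at_top"
    by real_asymp
  from filterlim_compose[OF this Phi_at_top]
  have tail: "(\<lambda>n. (Phi (real n) + 1) powr q * exp (- \<kappa> * Phi (real n))) \<longlonglongrightarrow> 0" .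
  have "(Phi (real n) + 1) powr q * prob {\<omega> \<in> space M. real (Ktil Y E (real n) \<omega>) \<le> Phi (real n) / 2}
      \<le> (Phi (real n) + 1) powr q * exp (- \<kappa> * Phi (real n))" for n
    unfolding \<kappa>_def by (intro mult_left_mono prob_Ktil_le_half) simp_all
  then show ?thesis
    by (intro tendsto_sandwich[OF always_eventually always_eventually tendsto_const tail]) simp_all
qed

lemma integral_ratio_powr_tendsto:
  assumes "0 < q"
  shows "(\<lambda>n. integral\<^sup>L M (\<lambda>\<omega>. \<bar>ratio c n \<omega> - 1\<bar> powr q)) \<longlonglongrightarrow> 0"
proof (rule integral_tendsto_zero_of_bounded_off_events)
  show "(\<lambda>n. (Phi (real n) + 1) powr q * prob {\<omega> \<in> space M. real (Ktil Y E (real n) \<omega>) \<le> Phi (real n) / 2})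
      \<longlonglongrightarrow> 0"
    by (rule lower_tail_weighted_tendsto)
  have "\<forall>\<^sub>F n in sequentially. 4 + 4 * \<bar>c\<bar> \<le> Phi (real n)"
    using Phi_at_top unfolding filterlim_at_top by blast
  then show "\<forall>\<^sub>F n in sequentially. \<forall>\<omega> \<in> space M - {\<omega> \<in> space M. real (Ktil Y E (real n) \<omega>) \<le> Phi (real n) / 2}.
      \<bar>ratio c n \<omega> - 1\<bar> powr q \<le> 3 powr q"
    by eventually_elim (use assms in \<open>auto intro!: ratio_powr_le_off_lower_tail\<close>)
  show "\<bar>ratio c n \<omega> - 1\<bar> powr q \<le> (Phi (real n) + 1) powr q" for n \<omega>
    using assms by (intro ratio_powr_le) simp
  show "AE \<omega> in M. (\<lambda>n. \<bar>ratio c n \<omega> - 1\<bar> powr q) \<longlonglongrightarrow> 0"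
    using AE_ratio_tendsto[of c]
  proof eventually_elim
    case (elim \<omega>)
    have "(\<lambda>n. \<bar>ratio c n \<omega> - 1\<bar>) \<longlonglongrightarrow> \<bar>1 - 1\<bar>"
      by (intro tendsto_intros elim)
    then show ?case
      using assms by (intro tendsto_zero_powrI[where b=q]) auto
  qed
qed auto

end

theorem lemma5p2:
  fixes M :: "'a measure" and p :: "nat \<Rightarrow> real" and \<beta> :: real
    and Y :: "nat \<Rightarrow> 'a \<Rightarrow> nat" and E :: "nat \<Rightarrow> 'a \<Rightarrow> real" and c :: real
  assumes "prob_space M"
    and "0 < \<beta>" and "\<beta> < 1"
    and "\<forall>l\<ge>1. 0 < p l"
    and "\<forall>l\<ge>1. p (Suc l) \<le> p l"
    and "(\<lambda>l. p (Suc l)) sums 1"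
    and "\<exists>L. slowly_varying L \<and> (\<forall>\<^sub>F x in at_top. real (nu_count p x) = x powr \<beta> * L x)"
    and "\<forall>i. Y i \<in> measurable M (count_space UNIV)"
    and "\<forall>i l. l \<ge> 1 \<longrightarrow> measure M {\<omega> \<in> space M. Y i \<omega> = l} = p l"
    and "\<forall>j. distributed M lborel (E j) (exponential_density 1)"
    and "prob_space.indep_vars M (\<lambda>_. borel)
           (\<lambda>k. case k of Inl i \<Rightarrow> (\<lambda>\<omega>. real (Y i \<omega>)) | Inr j \<Rightarrow> E j) UNIV"
  defines "\<Phi> \<equiv> (\<lambda>n::nat. integral\<^sup>L M (\<lambda>\<omega>. real (Ktil Y E (real n) \<omega>)))"
  defines "R \<equiv> (\<lambda>(n::nat) \<omega>. \<Phi> n / max (real (Ktil Y E (real n) \<omega>) + c) 1)"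
  shows "(AE \<omega> in M. (\<lambda>n. R n \<omega>) \<longlonglongrightarrow> 1)
       \<and> (\<forall>q::real. q \<ge> 1 \<longrightarrow>
            (\<forall>n. integrable M (\<lambda>\<omega>. \<bar>R n \<omega> - 1\<bar> powr q)) \<and>
            (\<lambda>n. integral\<^sup>L M (\<lambda>\<omega>. \<bar>R n \<omega> - 1\<bar> powr q)) \<longlonglongrightarrow> 0)"
proof -
  interpret poissonized_urns M p Y E
    by (rule poissonized_urns.intro[OF assms(1) poissonized_urns_axioms.intro[OF assms(4,6,8-11)]])
  have "R = ratio c"
    unfolding R_def \<Phi>_def ratio_def by (simp add: integral_Ktil)
  moreover have "(\<forall>n. integrable M (\<lambda>\<omega>. \<bar>ratio c n \<omega> - 1\<bar> powr q)) \<and>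
      (\<lambda>n. integral\<^sup>L M (\<lambda>\<omega>. \<bar>ratio c n \<omega> - 1\<bar> powr q)) \<longlonglongrightarrow> 0" if "1 \<le> q" for q
    using that by (simp add: integrable_ratio_powr integral_ratio_powr_tendsto)
  ultimately show ?thesis
    using AE_ratio_tendsto by simp
qed

end
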